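(* Let $\vec v$ be a list of variables, $X,Y$ expectations, and let $S_C$ be the HeyVL encoding of the specification statement $[\vec v](X,Y)$, namely $S_C=\mathtt{assert}\ X;\ \mathtt{havoc}\ \vec v;\ \mathtt{validate};\ \mathtt{assume}\ Y$. Let $X',Y'$ be expectations. (1) If $S'$ is a minimal error-witnessing slice of $S_C$ w.r.t. $(X',Y')$ which contains $\mathtt{assert}\ X$, then $X'(\sigma')\not\le X(\sigma')$ for some state $\sigma'$. (2) If $S'$ is a verification-witnessing slice of $S_C$ w.r.t. $(X',Y')$ with $\models\{X'\}S'\{Y'\}$ which does not contain $\mathtt{assume}\ Y$, then $X'\preceq Y'$.
   Context: Expectations are functions from program states to $[0,\infty]$, ordered pointwise by $\preceq$. HeyVL verification pre-expectations: $\mathrm{vp}[S_1;S_2](Z)=\mathrm{vp}[S_1](\mathrm{vp}[S_2](Z))$; $\mathrm{vp}[\mathtt{assert}\ X](Z)=\min(X,Z)$; $\mathrm{vp}[\mathtt{havoc}\ \vec v](Z)$ is the pointwise infimum of $Z$ over all values of $\vec v$; $\mathrm{vp}[\mathtt{validate}](Z)$ is $\infty$ where $Z=\infty$ and $0$ elsewhere; $\mathrm{vp}[\mathtt{assume}\ Y](Z)$ is $\infty$ where $Y\le Z$ and $Z$ elsewhere; $\mathrm{vp}[\mathtt{skip}](Z)=Z$. Subprograms of $S_C$ are obtained by removing (replacing by $\mathtt{skip}$) some of its four statements. Write $\sigma\models\{A\}S\{B\}$ iff $A(\sigma)\le\mathrm{vp}[S](B)(\sigma)$ and $\models\{A\}S\{B\}$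 iff this holds for all $\sigma$. A subprogram $P$ of $S$ is an error-witnessing slice w.r.t. $(A,B)$ if $\not\models\{A\}P\{B\}$ and every state $\sigma'$ with $\sigma'\not\models\{A\}P\{B\}$ satisfies $\sigma'\not\models\{A\}S\{B\}$; it is minimal if no proper subprogram of it is also such a slice. $P$ is a verification-witnessing slice w.r.t. $(A,B)$ if $\models\{A\}P\{B\}$ implies $\models\{A\}S\{B\}$. *)

theory Defs
  imports Main "HOL-Library.Extended_Nonnegative_Real"
begin

type_synonym ('x,'a) state = "'x \<Rightarrow> 'a"
type_synonym ('x,'a) expect = "('x,'a) state \<Rightarrow> ennreal"

definition vp_assert :: "('x,'a) expect \<Rightarrow> ('x,'a) expect \<Rightarrow> ('x,'a) expect" where
  "vp_assert X Z = (\<lambda>\<sigma>. min (X \<sigma>) (Z \<sigma>))"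

definition vp_havoc :: "'x list \<Rightarrow> ('x,'a) expect \<Rightarrow> ('x,'a) expect" where
  "vp_havoc vs Z = (\<lambda>\<sigma>. INF \<tau> \<in> {\<tau>. \<forall>x. x \<notin> set vs \<longrightarrow> \<tau> x = \<sigma> x}. Z \<tau>)"

definition vp_validate :: "('x,'a) expect \<Rightarrow> ('x,'a) expect" where
  "vp_validate Z = (\<lambda>\<sigma>. if Z \<sigma> = \<infinity> then \<infinity> else 0)"

definition vp_assume :: "('x,'a) expect \<Rightarrow> ('x,'a) expect \<Rightarrow> ('x,'a) expect" where
  "vp_assume Y Z = (\<lambda>\<sigma>. if Y \<sigma> \<le> Z \<sigma> then \<infinity> else Z \<sigma>)"

text \<open>A subprogram of S_C = assert X; havoc vs; validate; assume Y is given by the set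
  P \<subseteq> {0,1,2,3} of statement positions kept (0 = assert X, 1 = havoc vs, 2 = validate,
  3 = assume Y); removed statements are replaced by skip.\<close>
definition subprograms :: "nat set set" where
  "subprograms = Pow {0,1,2,3}"

definition vp_SC :: "'x list \<Rightarrow> ('x,'a) expect \<Rightarrow> ('x,'a) expect \<Rightarrow> nat set
    \<Rightarrow> ('x,'a) expect \<Rightarrow> ('x,'a) expect" where
  "vp_SC vs X Y P Z =
     (if 0 \<in> P then vp_assert X else id)
       ((if 1 \<in> P then vp_havoc vs else id)
         ((if 2 \<in> P then vp_validate else id)
           ((if 3 \<in> P then vp_assume Y else id) Z)))"

definition valid_at :: "('x,'a) expect \<Rightarrow> (('x,'a) expect \<Rightarrow> ('x,'a) expect) \<Rightarrow> ('x,'a) expect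
    \<Rightarrow> ('x,'a) state \<Rightarrow> bool" where
  "valid_at A vp B \<sigma> \<longleftrightarrow> A \<sigma> \<le> vp B \<sigma>"

definition valid :: "('x,'a) expect \<Rightarrow> (('x,'a) expect \<Rightarrow> ('x,'a) expect) \<Rightarrow> ('x,'a) expect \<Rightarrow> bool" where
  "valid A vp B \<longleftrightarrow> (\<forall>\<sigma>. valid_at A vp B \<sigma>)"

definition err_slice :: "'x list \<Rightarrow> ('x,'a) expect \<Rightarrow> ('x,'a) expect \<Rightarrow> nat set
    \<Rightarrow> ('x,'a) expect \<Rightarrow> ('x,'a) expect \<Rightarrow> bool" where
  "err_slice vs X Y P A B \<longleftrightarrow>
     P \<in> subprograms \<and>
     \<not> valid A (vp_SC vs X Y P) B \<and>
     (\<forall>\<sigma>'. \<not> valid_at A (vp_SC vs X Y P) B \<sigma>' \<longrightarrow> \<not> valid_at A (vp_SC vs X Y {0,1,2,3}) B \<sigma>')"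

definition minimal_err_slice :: "'x list \<Rightarrow> ('x,'a) expect \<Rightarrow> ('x,'a) expect \<Rightarrow> nat set
    \<Rightarrow> ('x,'a) expect \<Rightarrow> ('x,'a) expect \<Rightarrow> bool" where
  "minimal_err_slice vs X Y P A B \<longleftrightarrow>
     err_slice vs X Y P A B \<and> (\<forall>Q. Q \<subset> P \<longrightarrow> \<not> err_slice vs X Y Q A B)"

definition ver_slice :: "'x list \<Rightarrow> ('x,'a) expect \<Rightarrow> ('x,'a) expect \<Rightarrow> nat set
    \<Rightarrow> ('x,'a) expect \<Rightarrow> ('x,'a) expect \<Rightarrow> bool" where
  "ver_slice vs X Y P A B \<longleftrightarrow>
     P \<in> subprograms \<and>
     (valid A (vp_SC vs X Y P) B \<longrightarrow> valid A (vp_SC vs X Y {0,1,2,3}) B)"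

end

theory Submission
  imports Defs
begin

text \<open>Without \<open>assume Y\<close>, every statement of \<open>S\<^sub>C\<close> can only lower the post-expectation:
  \<open>assert\<close> takes a minimum, \<open>havoc\<close> an infimum, and \<open>validate\<close> maps \<open>Z\<close> to \<open>0\<close> or to
  \<open>Z = \<infinity>\<close>. Hence a valid triple \<open>{X'} S' {Y'}\<close> for such a slice forces \<open>X' \<preceq> Y'\<close>.
  For the error-witnessing part: if \<open>X' \<preceq> X\<close>, then \<open>X' \<sigma> \<le> min (X \<sigma>) (Z \<sigma>)\<close> iff
  \<open>X' \<sigma> \<le> Z \<sigma>\<close>, so \<open>assert X\<close> never decides whether a state violates the triple;
  dropping it yields a smaller error-witnessing slice, contradicting minimality.\<close>

lemma vp_assert_le: "vp_assert X Z \<sigma> \<le> Z \<sigma>"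
  unfolding vp_assert_def by simp

lemma vp_havoc_le: "vp_havoc vs Z \<sigma> \<le> Z \<sigma>"
  unfolding vp_havoc_def by (rule INF_lower) simp

lemma vp_validate_le: "vp_validate Z \<sigma> \<le> Z \<sigma>"
  unfolding vp_validate_def by simp

lemma vp_SC_le_post:
  assumes "3 \<notin> P"
  shows "vp_SC vs X Y P Z \<sigma> \<le> Z \<sigma>"
  using assms unfolding vp_SC_def
  by (auto intro: order_trans[OF vp_assert_le] order_trans[OF vp_havoc_le]
      order_trans[OF vp_validate_le] vp_assert_le vp_havoc_le vp_validate_le)

lemma valid_vp_SC_without_assume_imp_le:
  assumes "3 \<notin> P" and "valid A (vp_SC vs X Y P) B"
  shows "A \<le> B"
proof (rule le_funI)
  fix \<sigma>
  have "A \<sigma> \<le> vp_SC vs X Y P B \<sigma>"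
    using assms(2) unfolding valid_def valid_at_def by simp
  also have "\<dots> \<le> B \<sigma>"
    using assms(1) by (rule vp_SC_le_post)
  finally show "A \<sigma> \<le> B \<sigma>" .
qed

lemma vp_SC_assert_eq_min:
  assumes "0 \<in> P"
  shows "vp_SC vs X Y P Z \<sigma> = min (X \<sigma>) (vp_SC vs X Y (P - {0}) Z \<sigma>)"
  using assms unfolding vp_SC_def vp_assert_def by simp

lemma valid_at_remove_dominating_assert:
  assumes "A \<le> X" and "0 \<in> P"
  shows "valid_at A (vp_SC vs X Y P) B \<sigma> \<longleftrightarrow> valid_at A (vp_SC vs X Y (P - {0})) B \<sigma>"
  using assms unfolding valid_at_def vp_SC_assert_eq_min[OF assms(2)]
  by (simp add: le_fun_def)

lemma err_slice_remove_dominating_assert: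
  assumes "A \<le> X" and "0 \<in> P" and "err_slice vs X Y P A B"
  shows "err_slice vs X Y (P - {0}) A B"
  using assms(3) valid_at_remove_dominating_assert[OF assms(1,2)]
  unfolding err_slice_def valid_def subprograms_def by auto

lemma minimal_err_slice_assert_not_dominating:
  assumes "minimal_err_slice vs X Y P A B" and "0 \<in> P"
  shows "\<not> A \<le> X"
proof
  assume "A \<le> X"
  with assms have "err_slice vs X Y (P - {0}) A B"
    unfolding minimal_err_slice_def by (blast intro: err_slice_remove_dominating_assert)
  moreover have "P - {0} \<subset> P"
    using assms(2) by blast
  ultimately show False
    using assms(1) unfolding minimal_err_slice_def by blast
qed

theorem theorem5:
  fixes vs :: "'x list" and X Y X' Y' :: "('x,'a) expect" and S' :: "nat set"
  shows "(minimal_err_slice vs X Y S' X' Y' \<and> 0 \<in> S' \<longrightarrow> (\<exists>\<sigma>'. \<not> X' \<sigma>' \<le> X \<sigma>'))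
       \<and> (ver_slice vs X Y S' X' Y' \<and> valid X' (vp_SC vs X Y S') Y' \<and> 3 \<notin> S'
            \<longrightarrow> X' \<le> Y')"
proof (intro conjI impI)
  assume "minimal_err_slice vs X Y S' X' Y' \<and> 0 \<in> S'"
  then have "\<not> X' \<le> X"
    by (blast dest: minimal_err_slice_assert_not_dominating)
  then show "\<exists>\<sigma>'. \<not> X' \<sigma>' \<le> X \<sigma>'"
    by (auto simp: le_fun_def)
next
  assume "ver_slice vs X Y S' X' Y' \<and> valid X' (vp_SC vs X Y S') Y' \<and> 3 \<notin> S'"
  then show "X' \<le> Y'"
    by (blast intro: valid_vp_SC_without_assume_imp_le)
qed

end
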